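(* For every $x\ge1$, $$x^{-1/x}\,\Gamma\!\Big(\frac1x\Big)\ \le\ \Gamma\!\Big(x,\frac1x\Big)\ \le\ x^{x}\,\Gamma(x),$$ and for every $0<x\le1$ both inequalities are reversed: $$x^{-1/x}\,\Gamma\!\Big(\frac1x\Big)\ \ge\ \Gamma\!\Big(x,\frac1x\Big)\ \ge\ x^{x}\,\Gamma(x).$$
   Context: For $x>0,y>0$ the Bigamma function is the (convergent) improper integral $\Gamma(x,y):=\int_0^1(-\ln t)^{x-1}\big(-\ln(1-t)\big)^{y-1}\,dt$. $\Gamma(x)$ (one argument) denotes Euler's gamma function. *)

theory Defs
  imports "HOL-Analysis.Analysis"
begin

text \<open>For x, y > 0 the integrand is nonnegative and (improperly) integrable, so the
  improper Riemann integral coincides with the Lebesgue integral over the open interval.\<close>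

definition Bigamma :: "real \<Rightarrow> real \<Rightarrow> real" where
  "Bigamma x y = (LBINT t:{0<..<1}. (- ln t) powr (x - 1) * (- ln (1 - t)) powr (y - 1))"

end

theory Submission
  imports Defs "HOL-Real_Asymp.Real_Asymp"
begin

text \<open>The two elementary inequalities \<open>1 - t \<le> -ln t\<close> and \<open>t \<le> -ln (1 - t)\<close> on \<open>(0,1)\<close>
  sandwich the Bigamma integrand between two kernels whose integrals are explicit:
  \<open>\<integral>\<^sub>0\<^sup>1 (1-t)\<^bsup>x-1\<^esup>(-ln(1-t))\<^bsup>y-1\<^esup> dt = x\<^bsup>-y\<^esup>\<Gamma>(y)\<close> (substitute \<open>t = 1 - e\<^bsup>-u/x\<^esup>\<close>) and, by the
  reflection \<open>t \<mapsto> 1 - t\<close>, \<open>\<integral>\<^sub>0\<^sup>1 (-ln t)\<^bsup>x-1\<^esup>t\<^bsup>y-1\<^esup> dt = y\<^bsup>-x\<^esup>\<Gamma>(x)\<close>. Which way the sandwich goes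
  depends only on the signs of \<open>x - 1\<close> and \<open>y - 1\<close>; for \<open>y = 1/x\<close> they are opposite, and the
  case \<open>x \<le> 1\<close> reduces to \<open>x \<ge> 1\<close> by the symmetry \<open>\<Gamma>(x,y) = \<Gamma>(y,x)\<close>.\<close>

lemma set_integral_sandwich:
  fixes f g h :: "'a \<Rightarrow> real"
  assumes f: "set_integrable M A f" and h: "set_integrable M A h"
    and g: "set_borel_measurable M A g"
    and fg: "\<And>x. x \<in> A \<Longrightarrow> f x \<le> g x" and gh: "\<And>x. x \<in> A \<Longrightarrow> g x \<le> h x"
  shows "set_integrable M A g"
    and "(LINT x:A|M. f x) \<le> (LINT x:A|M. g x)"
    and "(LINT x:A|M. g x) \<le> (LINT x:A|M. h x)"
proof -
  have "set_integrable M A (\<lambda>x. \<bar>f x\<bar> + \<bar>h x\<bar>)"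
    using f h by (intro set_integral_add(1) set_integrable_abs)
  then show g_int: "set_integrable M A g"
    by (rule set_integrable_bound[OF _ g]) (use fg gh in \<open>force intro: AE_I2\<close>)
  show "(LINT x:A|M. f x) \<le> (LINT x:A|M. g x)" by (rule set_integral_mono[OF f g_int fg])
  show "(LINT x:A|M. g x) \<le> (LINT x:A|M. h x)" by (rule set_integral_mono[OF g_int h gh])
qed

lemma set_integral_reflect:
  fixes f :: "real \<Rightarrow> 'b::{banach, second_countable_topology}"
  shows "set_integrable lborel {a<..<b} (\<lambda>t. f (a + b - t)) \<longleftrightarrow> set_integrable lborel {a<..<b} f"
    and "(LBINT t:{a<..<b}. f (a + b - t)) = (LBINT t:{a<..<b}. f t)"
proof -
  define h where "h = (\<lambda>t. indicator {a<..<b} t *\<^sub>R f t)"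
  have h_reflect: "(\<lambda>t. h ((a + b) + (-1) * t)) = (\<lambda>t. indicator {a<..<b} t *\<^sub>R f (a + b - t))"
    by (auto simp: h_def indicator_def fun_eq_iff)
  have "integrable lborel (\<lambda>t. h ((a + b) + (-1) * t)) = integrable lborel h"
    by (rule lborel_integrable_real_affine_iff) simp
  then show "set_integrable lborel {a<..<b} (\<lambda>t. f (a + b - t)) \<longleftrightarrow> set_integrable lborel {a<..<b} f"
    unfolding set_integrable_def h_reflect by (simp add: h_def)
  have "(\<integral>t. h t \<partial>lborel) = \<bar>-1\<bar> *\<^sub>R (\<integral>t. h ((a + b) + (-1) * t) \<partial>lborel)"
    by (rule lborel_integral_real_affine) simp
  then show "(LBINT t:{a<..<b}. f (a + b - t)) = (LBINT t:{a<..<b}. f t)"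
    unfolding set_lebesgue_integral_def h_reflect by (simp add: h_def)
qed

lemma Gamma_set_integral_real:
  fixes s :: real
  assumes s: "s > 0"
  shows "set_integrable lborel {0<..} (\<lambda>u. u powr (s - 1) / exp u)"
    and "(LBINT u:{0<..}. u powr (s - 1) / exp u) = Gamma s"
proof -
  have "(\<integral>\<^sup>+t. ennreal (indicator {0<..} t *\<^sub>R (t powr (s - 1) / exp t)) \<partial>lborel) = ennreal (Gamma s)"
    unfolding Gamma_conv_nn_integral_real[OF s]
    by (rule nn_integral_cong) (auto simp: indicator_def)
  then have "has_bochner_integral lborel (\<lambda>t. indicator {0<..} t *\<^sub>R (t powr (s - 1) / exp t)) (Gamma s)"
    by (rule has_bochner_integral_nn_integral[rotated 3])
       (measurable, auto simp: Gamma_real_pos s less_imp_le)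
  then show "set_integrable lborel {0<..} (\<lambda>u. u powr (s - 1) / exp u)"
    and "(LBINT u:{0<..}. u powr (s - 1) / exp u) = Gamma s"
    unfolding set_integrable_def set_lebesgue_integral_def by (simp_all add: has_bochner_integral_iff)
qed

lemma set_integral_powr_ln_one_minus:
  fixes x y :: real
  assumes x: "x > 0" and y: "y > 0"
  shows "set_integrable lborel {0<..<1} (\<lambda>t. (1 - t) powr (x - 1) * (- ln (1 - t)) powr (y - 1))"
    and "(LBINT t:{0<..<1}. (1 - t) powr (x - 1) * (- ln (1 - t)) powr (y - 1)) = x powr (-y) * Gamma y"
proof -
  define f where "f = (\<lambda>t::real. (1 - t) powr (x - 1) * (- ln (1 - t)) powr (y - 1))"
  define g where "g = (\<lambda>u::real. 1 - exp (-u/x))"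
  define g' where "g' = (\<lambda>u::real. exp (-u/x) / x)"
  have fg: "f (g u) * g' u = x powr (-y) * (u powr (y - 1) / exp u)" if u: "u > 0" for u
  proof -
    have exp_part: "exp (-u/x) powr (x - 1) * exp (-u/x) = exp (-u)"
      using x by (simp add: powr_def exp_add[symmetric] field_simps)
    have powr_part: "(u/x) powr (y - 1) / x = u powr (y - 1) / x powr y"
      using x u by (simp add: powr_divide powr_diff)
    have "f (g u) * g' u = (exp (-u/x) powr (x - 1) * exp (-u/x)) * ((u/x) powr (y - 1) / x)"
      by (simp add: f_def g_def g'_def)
    also have "\<dots> = exp (-u) * (u powr (y - 1) / x powr y)"
      by (simp only: exp_part powr_part)
    finally show ?thesis by (simp add: powr_minus exp_minus field_simps)
  qed
  have "set_integrable lborel {0<..} (\<lambda>u. x powr (-y) * (u powr (y - 1) / exp u))"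
    by (rule set_integrable_mult_right[OF Gamma_set_integral_real(1)[OF y]])
  then have fg_int: "set_integrable lborel (einterval 0 \<infinity>) (\<lambda>u. f (g u) * g' u)"
    by (subst set_integrable_cong[OF refl _ fg]) (auto simp: zero_ereal_def)
  have contf: "isCont f (g u)" if "0 < u" for u
  proof -
    have "0 < 1 - g u" "1 - g u < 1" using that x by (auto simp: g_def)
    then show ?thesis unfolding f_def by (intro continuous_intros) auto
  qed
  have "((\<lambda>u. 1 - exp (-u/x)) \<longlongrightarrow> 1 - exp (-0/x)) (at_right 0)"
    using x by (intro tendsto_intros) auto
  then have g_0: "((ereal \<circ> g \<circ> real_of_ereal) \<longlongrightarrow> 0) (at_right 0)"
    by (simp add: zero_ereal_def ereal_tendsto_simps g_def)
  have "((\<lambda>u. 1 - exp (-u/x)) \<longlongrightarrow> 1) at_top"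
    using x by real_asymp
  then have g_at_top: "((ereal \<circ> g \<circ> real_of_ereal) \<longlongrightarrow> 1) (at_left \<infinity>)"
    by (simp add: one_ereal_def ereal_tendsto_simps g_def)
  note substitution =
    interval_integral_substitution_nonneg[of 0 \<infinity> g g' f 0 1, OF _ _ contf _ _ _ g_0 g_at_top fg_int]
  have "\<And>u. DERIV g u :> g' u"
    unfolding g_def g'_def using x by (auto intro!: derivative_eq_intros)
  moreover have "\<And>u. isCont g' u"
    unfolding g'_def using x by (intro continuous_intros) auto
  ultimately have f_substituted: "set_integrable lborel {0<..<1} f"
      "(LBINT t:{0<..<1}. f t) = (LBINT u:{0<..}. f (g u) * g' u)"
    using substitution x
    by (auto simp: f_def g_def g'_def zero_ereal_def one_ereal_def interval_lebesgue_integral_def)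
  then show "set_integrable lborel {0<..<1} (\<lambda>t. (1 - t) powr (x - 1) * (- ln (1 - t)) powr (y - 1))"
    by (simp add: f_def)
  have "(LBINT u:{0<..}. f (g u) * g' u) = (LBINT u:{0<..}. x powr (-y) * (u powr (y - 1) / exp u))"
    by (rule set_lebesgue_integral_cong) (auto simp: fg)
  also have "\<dots> = x powr (-y) * Gamma y"
    by (subst set_integral_mult_right) (simp only: Gamma_set_integral_real(2)[OF y])
  finally show "(LBINT t:{0<..<1}. (1 - t) powr (x - 1) * (- ln (1 - t)) powr (y - 1)) = x powr (-y) * Gamma y"
    using f_substituted(2) by (simp add: f_def)
qed

lemma set_integral_ln_powr:
  fixes x y :: real
  assumes x: "x > 0" and y: "y > 0"
  shows "set_integrable lborel {0<..<1} (\<lambda>t. (- ln t) powr (x - 1) * t powr (y - 1))"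
    and "(LBINT t:{0<..<1}. (- ln t) powr (x - 1) * t powr (y - 1)) = y powr (-x) * Gamma x"
  using set_integral_reflect[where f = "\<lambda>t. (- ln t) powr (x - 1) * t powr (y - 1)" and a = 0 and b = 1]
    set_integral_powr_ln_one_minus[OF y x]
  by (simp_all add: mult.commute)

lemma Bigamma_commute: "Bigamma x y = Bigamma y x"
  using set_integral_reflect(2)
    [where f = "\<lambda>t. (- ln t) powr (x - 1) * (- ln (1 - t)) powr (y - 1)" and a = 0 and b = 1]
  by (simp add: Bigamma_def mult.commute)

lemma Bigamma_bounds:
  fixes x y :: real
  assumes x: "1 \<le> x" and y: "0 < y" "y \<le> 1"
  shows "x powr (-y) * Gamma y \<le> Bigamma x y"
    and "Bigamma x y \<le> y powr (-x) * Gamma x"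
proof -
  define L where "L = (\<lambda>t::real. (1 - t) powr (x - 1) * (- ln (1 - t)) powr (y - 1))"
  define B where "B = (\<lambda>t::real. (- ln t) powr (x - 1) * (- ln (1 - t)) powr (y - 1))"
  define U where "U = (\<lambda>t::real. (- ln t) powr (x - 1) * t powr (y - 1))"
  have LB: "L t \<le> B t" and BU: "B t \<le> U t" if "t \<in> {0<..<1}" for t
  proof -
    have t: "0 < t" "t < 1" using that by auto
    have "1 - t \<le> - ln t" "t \<le> - ln (1 - t)"
      using ln_le_minus_one[of t] ln_le_minus_one[of "1 - t"] t by auto
    then have "(1 - t) powr (x - 1) \<le> (- ln t) powr (x - 1)"
      and "(- ln (1 - t)) powr (y - 1) \<le> t powr (y - 1)"
      using t x y by (auto intro: powr_mono2 powr_mono2')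
    then show "L t \<le> B t" "B t \<le> U t"
      unfolding L_def B_def U_def by (auto intro: mult_right_mono mult_left_mono)
  qed
  have x0: "x > 0" using x by simp
  have L_int: "set_integrable lborel {0<..<1} L"
    unfolding L_def by (rule set_integral_powr_ln_one_minus(1)[OF x0 y(1)])
  have U_int: "set_integrable lborel {0<..<1} U"
    unfolding U_def by (rule set_integral_ln_powr(1)[OF x0 y(1)])
  have B_meas: "set_borel_measurable lborel {0<..<1} B"
    unfolding set_borel_measurable_def B_def by measurable
  note sandwich = set_integral_sandwich[OF L_int U_int B_meas LB BU]
  show "x powr (-y) * Gamma y \<le> Bigamma x y"
    using sandwich(2) set_integral_powr_ln_one_minus(2)[OF x0 y(1)]
    by (simp add: Bigamma_def L_def B_def)
  show "Bigamma x y \<le> y powr (-x) * Gamma x"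
    using sandwich(3) set_integral_ln_powr(2)[OF x0 y(1)]
    by (simp add: Bigamma_def B_def U_def)
qed

theorem mainTheorem8:
  shows "(\<forall>x::real. x \<ge> 1 \<longrightarrow>
            x powr (-1/x) * Gamma (1/x) \<le> Bigamma x (1/x) \<and>
            Bigamma x (1/x) \<le> x powr x * Gamma x) \<and>
         (\<forall>x::real. 0 < x \<and> x \<le> 1 \<longrightarrow>
            x powr (-1/x) * Gamma (1/x) \<ge> Bigamma x (1/x) \<and>
            Bigamma x (1/x) \<ge> x powr x * Gamma x)"
proof (rule conjI; intro allI impI)
  fix x :: real
  assume x: "x \<ge> 1"
  then have y: "0 < 1/x" "1/x \<le> 1" and powr_inverse: "(1/x) powr (-x) = x powr x"
    by (simp_all add: powr_divide powr_minus)
  note bounds = Bigamma_bounds[OF x y, unfolded minus_divide_left powr_inverse]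
  show "x powr (-1/x) * Gamma (1/x) \<le> Bigamma x (1/x) \<and> Bigamma x (1/x) \<le> x powr x * Gamma x"
    using bounds by (rule conjI)
next
  fix x :: real
  assume "0 < x \<and> x \<le> 1"
  then have y: "0 < x" "x \<le> 1" and x: "1 \<le> 1/x" and powr_inverse: "(1/x) powr (-x) = x powr x"
    by (simp_all add: powr_divide powr_minus)
  note bounds = Bigamma_bounds[OF x y, unfolded minus_divide_left powr_inverse Bigamma_commute[of "1/x" x]]
  show "x powr (-1/x) * Gamma (1/x) \<ge> Bigamma x (1/x) \<and> Bigamma x (1/x) \<ge> x powr x * Gamma x"
    using bounds(2,1) by (rule conjI)
qed

end
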